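(* Under the standing setup, assume $\dim G_{\lambda_1}<d-1$. Let $(v^k)$, $(x^k)$ be generated by Algorithm U and let $\alpha_k=b_kd_k-a_ke_k$, where $a_k=\|Av^k\|^2$, $b_k=\langle Av^k,Ax^k\rangle$, $d_k=\|Bv^k\|^2$, $e_k=\langle Bv^k,Bx^k\rangle$. Then $\alpha_k\to0$ as $k\to\infty$ almost surely.
   Context: Standing setup. Let $d\ge 2$, $A\in\mathbb R^{m\times d}$, $B\in\mathbb R^{\ell\times d}$ with $\ker B=\{0\}$, so $B^TB$ is symmetric positive definite. $\mathbb S^{d-1}$ is the Euclidean unit sphere of $\mathbb R^d$ and $\mathcal U(\mathbb S^{d-1})$ the uniform (normalized surface) probability measure on it. Define $f(v)=\|Av\|^2/\|Bv\|^2$ for $v\neq0$. A generalized eigenvector of $(A^TA,B^TB)$ is a vector $v\neq 0$ with $A^TAv=\lambda B^TBv$ for some $\lambda\in\mathbb R$ (a generalized eigenvalue); the generalized eigenvalues are exactly the eigenvalues of the symmetric matrix $K=(B^TB)^{-1/2}A^TA(B^TB)^{-1/2}$, listed with multiplicity as $\lambda_1\ge\lambda_2\ge\dots\ge\lambda_d$. For a generalized eigenvalue $\lambda$ let $G_\lambda=\{v\in\mathbb R^d\setminus\{0\}: A^TAv=\lambda B^TBv\}$, and $\dim G_\lambda$ denotes the dimension of the linear subspace $G_\lambda\cup\{0\}$. Algorithm U. Let $g\sim\mathcal N(0,I_d)$ and $v^0=g/\|g\|$; let $x^0,x^1,x^2,\dots$ be i.i.d. with law $\mathcal U(\mathbb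 S^{d-1})$, independent of $g$. Given $v^k\in\mathbb S^{d-1}$, set $s_k(\tau)=f(v^k+\tau x^k)$ for $\tau\in\mathbb R$ with $v^k+\tau x^k\neq0$; let $\tau_k$ be a (measurably chosen) maximizer of $s_k$ over $\tau\in\mathbb R$, with $\tau_k=0$ if no maximizer exists, and set $v^{k+1}=(v^k+\tau_kx^k)/\|v^k+\tau_kx^k\|$. *)

theory Defs
  imports "HOL-Probability.Probability"
begin

definition rayq :: "real^'n^'m \<Rightarrow> real^'n^'l \<Rightarrow> real^'n \<Rightarrow> real" where
  "rayq A B v = (norm (A *v v))\<^sup>2 / (norm (B *v v))\<^sup>2"

definition gen_eigenspace :: "real^'n^'m \<Rightarrow> real^'n^'l \<Rightarrow> real \<Rightarrow> (real^'n) set" where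
  "gen_eigenspace A B lam =
     {v. (transpose A ** A) *v v = lam *\<^sub>R ((transpose B ** B) *v v)}"

definition gen_eigenvalue :: "real^'n^'m \<Rightarrow> real^'n^'l \<Rightarrow> real \<Rightarrow> bool" where
  "gen_eigenvalue A B lam \<longleftrightarrow>
     (\<exists>v. v \<noteq> 0 \<and> (transpose A ** A) *v v = lam *\<^sub>R ((transpose B ** B) *v v))"

definition lambda_max :: "real^'n^'m \<Rightarrow> real^'n^'l \<Rightarrow> real" where
  "lambda_max A B = Max {lam. gen_eigenvalue A B lam}"

text \<open>Uniform (normalized surface) probability measure on the unit sphere,
  realised as the cone measure: radial projection of the uniform
  distribution on the punctured unit ball.\<close>
definition unif_sphere :: "(real^'n) measure" where
  "unif_sphere = distr (uniform_measure lborel (ball 0 1 - {0})) borel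
                       (\<lambda>x. x /\<^sub>R norm x)"

definition is_line_max :: "real^'n^'m \<Rightarrow> real^'n^'l \<Rightarrow> real^'n \<Rightarrow> real^'n \<Rightarrow> real \<Rightarrow> bool" where
  "is_line_max A B v x t \<longleftrightarrow> v + t *\<^sub>R x \<noteq> 0 \<and>
     (\<forall>s. v + s *\<^sub>R x \<noteq> 0 \<longrightarrow> rayq A B (v + s *\<^sub>R x) \<le> rayq A B (v + t *\<^sub>R x))"

end

theory Submission
  imports Defs "HOL-Computational_Algebra.Polynomial"
begin

text \<open>Along a line \<open>v + \<tau> x\<close> the quotient \<open>rayq A B\<close> is a ratio of two quadratics in \<open>\<tau>\<close>, so
  an exact line search gains at least a fixed multiple of \<open>\<alpha>\<^sup>2\<close>, \<open>\<alpha>\<close> being essentially the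
  directional derivative.  As the quotient is bounded, \<open>\<Sum> \<alpha>\<^sub>k\<^sup>2 < \<infinity>\<close>, provided the line search
  succeeds at every step.  It does, with a unique maximiser, unless the cubic form
  \<open>y \<mapsto> \<alpha>(y, v\<^sub>k)\<close> vanishes at \<open>x\<^sub>k\<close>.  When \<open>A\<^sup>T A\<close> is not a multiple of \<open>B\<^sup>T B\<close> this form is
  nonzero, so its zero set is a cone of measure zero for the uniform measure on the sphere.  Since
  \<open>x\<^sub>k\<close> is independent of \<open>v\<^sub>k\<close>, which by uniqueness of the maximiser is a Borel function of
  \<open>g, x\<^sub>0, \<dots>, x\<^sub>k\<^sub>-\<^sub>1\<close>, the line search almost surely never fails.\<close>

section \<open>The slope of the generalized Rayleigh quotient\<close>

lemma inner_gram_matrix: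
  fixes A :: "real^'n^'m"
  shows "inner ((transpose A ** A) *v y) x = inner (A *v y) (A *v x)"
  by (simp add: matrix_vector_mul_assoc[symmetric] dot_lmul_matrix)

lemma power2_norm_matrix_vector_line:
  fixes A :: "real^'n^'m"
  shows "(norm (A *v (v + t *\<^sub>R x)))\<^sup>2 =
    (norm (A *v v))\<^sup>2 + 2 * inner (A *v v) (A *v x) * t + (norm (A *v x))\<^sup>2 * t\<^sup>2"
  unfolding power2_norm_eq_inner
  by (simp add: matrix_vector_right_distrib matrix_vector_mult_scaleR inner_add_left
      inner_add_right inner_commute power2_eq_square algebra_simps)

lemma borel_measurable_matrix_vector_mult [measurable (raw)]:
  fixes A :: "real^'n^'m"
  shows "f \<in> borel_measurable N \<Longrightarrow> (\<lambda>\<omega>. A *v f \<omega>) \<in> borel_measurable N"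
  by (rule measurable_compose[OF _ borel_measurable_continuous_onI[OF matrix_vector_mult_linear_continuous_on]])

text \<open>The paper's \<open>\<alpha>\<close>: \<open>rayq_slope A B v x\<close> is \<open>\<parallel>B v\<parallel>\<^sup>4 / 2\<close> times the derivative of
  \<open>rayq A B\<close> at \<open>v\<close> in direction \<open>x\<close>.\<close>
definition rayq_slope :: "real^'n^'m \<Rightarrow> real^'n^'l \<Rightarrow> real^'n \<Rightarrow> real^'n \<Rightarrow> real" where
  "rayq_slope A B v x =
     inner (A *v v) (A *v x) * (norm (B *v v))\<^sup>2 - (norm (A *v v))\<^sup>2 * inner (B *v v) (B *v x)"

lemma rayq_slope_parallel: "rayq_slope A B (s *\<^sub>R y) (t *\<^sub>R y) = 0"
  unfolding rayq_slope_def power2_norm_eq_inner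
  by (simp add: matrix_vector_mult_scaleR algebra_simps)

lemma rayq_slope_line_through_0:
  assumes "v + t *\<^sub>R x = 0"
  shows "rayq_slope A B v x = 0" and "rayq_slope A B x v = 0"
proof -
  have "v = (- t) *\<^sub>R x" using assms by (simp add: eq_neg_iff_add_eq_0)
  then show "rayq_slope A B v x = 0" and "rayq_slope A B x v = 0"
    using rayq_slope_parallel[of A B "- t" x 1] rayq_slope_parallel[of A B 1 x "- t"] by simp_all
qed

lemma rayq_slope_scaleR_left: "rayq_slope A B (c *\<^sub>R y) w = c ^ 3 * rayq_slope A B y w"
  by (simp add: rayq_slope_def matrix_vector_mult_scaleR power_mult_distrib power2_eq_square
      power3_eq_cube algebra_simps)

lemma continuous_on_rayq_slope [continuous_intros]:
  assumes "continuous_on S f" and "continuous_on S g"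
  shows "continuous_on S (\<lambda>z. rayq_slope A B (f z) (g z))"
  unfolding rayq_slope_def
  by (intro continuous_intros continuous_on_compose2[OF matrix_vector_mult_linear_continuous_on] assms)
    auto

lemma borel_measurable_rayq_slope [measurable (raw)]:
  fixes A :: "real^'n^'m" and B :: "real^'n^'l"
  assumes [measurable]: "f \<in> borel_measurable N" "g \<in> borel_measurable N"
  shows "(\<lambda>\<omega>. rayq_slope A B (f \<omega>) (g \<omega>)) \<in> borel_measurable N"
  unfolding rayq_slope_def by measurable

section \<open>Non-scalar pencils\<close>

lemma eq_0_if_parallelogram_law_and_eq_0_off_hyperplane:
  fixes Q :: "'a::real_inner \<Rightarrow> real"
  assumes parallelogram: "\<And>y z. Q (y + z) + Q (y - z) = 2 * Q y + 2 * Q z"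
    and off: "\<And>y. inner u y \<noteq> 0 \<Longrightarrow> Q y = 0" and "u \<noteq> 0"
  shows "Q y = 0"
proof (cases "inner u y = 0")
  case True
  then show ?thesis
    using parallelogram[of y u] off[of "y + u"] off[of "y - u"] off[of u] \<open>u \<noteq> 0\<close>
    by (simp add: inner_add_right inner_diff_right)
qed (rule off)

lemma norm_square_proportional_if_rayq_slope_eq_0:
  fixes A :: "real^'n^'m" and B :: "real^'n^'l"
  assumes kerB: "\<forall>u. B *v u = 0 \<longrightarrow> u = 0" and "w \<noteq> 0"
    and slope: "\<forall>y. rayq_slope A B y w = 0"
  shows "\<exists>\<mu>. \<forall>y. (norm (A *v y))\<^sup>2 = \<mu> * (norm (B *v y))\<^sup>2"
proof -
  define u where "u = (transpose B ** B) *v w"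
  define p where "p = (transpose A ** A) *v w"
  have "inner p y = inner (A *v w) (A *v y)" "inner u y = inner (B *v w) (B *v y)" for y
    by (simp_all add: p_def u_def inner_gram_matrix)
  then have slope_eq:
    "rayq_slope A B y w = inner p y * (norm (B *v y))\<^sup>2 - (norm (A *v y))\<^sup>2 * inner u y" for y
    by (simp add: rayq_slope_def inner_commute[of "A *v y"] inner_commute[of "B *v y"])
  have "inner u w > 0"
    using kerB \<open>w \<noteq> 0\<close> by (auto simp: u_def inner_gram_matrix)
  then have uu: "inner u u > 0" by auto
  text \<open>The component \<open>r\<close> of \<open>p\<close> orthogonal to \<open>u\<close> vanishes, since the slope at \<open>r\<close> is
    \<open>\<parallel>r\<parallel>\<^sup>2 \<parallel>B r\<parallel>\<^sup>2\<close>.\<close>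
  define \<mu> where "\<mu> = inner p u / inner u u"
  define r where "r = p - \<mu> *\<^sub>R u"
  have ru: "inner u r = 0"
    using uu by (simp add: r_def \<mu>_def inner_diff_right inner_commute)
  have "inner p r = inner r r"
    using ru by (simp add: r_def inner_diff_left inner_commute)
  then have "inner r r * (norm (B *v r))\<^sup>2 = 0"
    using slope slope_eq[of r] ru by simp
  then have "r = 0" using kerB by auto
  then have p: "p = \<mu> *\<^sub>R u" by (simp add: r_def)
  define Q where "Q y = (norm (A *v y))\<^sup>2 - \<mu> * (norm (B *v y))\<^sup>2" for y
  have Q_off: "Q y = 0" if "inner u y \<noteq> 0" for y
    using slope slope_eq[of y] that by (simp add: p Q_def algebra_simps)
  have parallelogram: "Q (y + z) + Q (y - z) = 2 * Q y + 2 * Q z" for y z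
    by (simp add: Q_def matrix_vector_right_distrib matrix_vector_mult_diff_distrib
        power2_norm_eq_inner inner_add_left inner_add_right inner_diff_left inner_diff_right
        algebra_simps)
  have "Q y = 0" for y
    by (rule eq_0_if_parallelogram_law_and_eq_0_off_hyperplane[OF parallelogram Q_off]) (use uu in auto)
  then show ?thesis by (auto simp: Q_def)
qed

lemma gram_eq_if_norm_square_proportional:
  fixes A :: "real^'n^'m" and B :: "real^'n^'l"
  assumes "\<forall>y. (norm (A *v y))\<^sup>2 = \<mu> * (norm (B *v y))\<^sup>2"
  shows "(transpose A ** A) *v y = \<mu> *\<^sub>R ((transpose B ** B) *v y)"
proof -
  have polarization: "inner (C *v y) (C *v x) =
      ((norm (C *v (x + y)))\<^sup>2 - (norm (C *v x))\<^sup>2 - (norm (C *v y))\<^sup>2) / 2"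
    for C :: "real^'n^'k" and x
    by (simp add: matrix_vector_right_distrib power2_norm_eq_inner inner_add_left inner_add_right
        inner_commute)
  have "inner ((transpose A ** A) *v y - \<mu> *\<^sub>R ((transpose B ** B) *v y)) x = 0" for x
    unfolding inner_diff_left inner_scaleR_left inner_gram_matrix polarization[of A]
      polarization[of B] assms[rule_format]
    by (simp add: algebra_simps diff_divide_distrib)
  then show ?thesis by (metis eq_iff_diff_eq_0 inner_eq_zero_iff)
qed

lemma gen_eigenspace_lambda_max_eq_UNIV:
  fixes A :: "real^'n^'m" and B :: "real^'n^'l"
  assumes kerB: "\<forall>u. B *v u = 0 \<longrightarrow> u = 0"
    and gram: "\<And>y. (transpose A ** A) *v y = \<mu> *\<^sub>R ((transpose B ** B) *v y)"
  shows "gen_eigenspace A B (lambda_max A B) = UNIV"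
proof -
  have "{lam. gen_eigenvalue A B lam} = {\<mu>}"
  proof safe
    fix lam assume "gen_eigenvalue A B lam"
    then obtain y where "y \<noteq> 0" and "lam *\<^sub>R ((transpose B ** B) *v y) = \<mu> *\<^sub>R ((transpose B ** B) *v y)"
      unfolding gen_eigenvalue_def gram by auto
    moreover have "inner ((transpose B ** B) *v y) y > 0"
      using kerB \<open>y \<noteq> 0\<close> by (auto simp: inner_gram_matrix)
    ultimately show "lam = \<mu>" by auto
  next
    have "(axis undefined 1 :: real^'n) \<noteq> 0" by (simp add: axis_eq_0_iff)
    then show "gen_eigenvalue A B \<mu>" unfolding gen_eigenvalue_def using gram by blast
  qed
  then show ?thesis by (simp add: gen_eigenspace_def lambda_max_def gram)
qed

lemma exists_rayq_slope_ne_0: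
  fixes A :: "real^'n^'m" and B :: "real^'n^'l"
  assumes kerB: "\<forall>u. B *v u = 0 \<longrightarrow> u = 0"
    and nonscalar: "gen_eigenspace A B (lambda_max A B) \<noteq> UNIV" and "w \<noteq> 0"
  shows "\<exists>z. rayq_slope A B z w \<noteq> 0"
  using norm_square_proportional_if_rayq_slope_eq_0[OF kerB \<open>w \<noteq> 0\<close>]
    gram_eq_if_norm_square_proportional gen_eigenspace_lambda_max_eq_UNIV[OF kerB] nonscalar
  by metis

section \<open>Exact line search\<close>

lemma quadratic_eq_square:
  fixes q0 q1 q2 \<tau> :: real
  assumes "q2 \<noteq> 0" and "q1\<^sup>2 = q0 * q2"
  shows "q0 + 2*q1*\<tau> + q2*\<tau>\<^sup>2 = q2 * (\<tau> + q1 / q2)\<^sup>2"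
proof -
  have "q2 * (\<tau> + q1 / q2)\<^sup>2 = q2*\<tau>\<^sup>2 + 2*q1*\<tau> + q1\<^sup>2 / q2"
    using assms(1) by (simp add: power2_eq_square field_simps)
  also have "q1\<^sup>2 / q2 = q0" using assms by (simp add: field_simps)
  finally show ?thesis by simp
qed

text \<open>For \<open>N(\<tau>) = a + 2b\<tau> + c\<tau>\<^sup>2\<close> and \<open>D(\<tau>) = d + 2e\<tau> + h\<tau>\<^sup>2\<close>, the supremum of \<open>N/D\<close> is
  the larger root \<open>\<mu>\<close> of \<open>(a - \<mu>d)(c - \<mu>h) = (b - \<mu>e)\<^sup>2\<close>; for this \<open>\<mu>\<close> the quadratic
  \<open>N - \<mu>D\<close> is a perfect square, with double root \<open>quad_ratio_argmax\<close>.\<close>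
definition quad_ratio_max :: "real \<Rightarrow> real \<Rightarrow> real \<Rightarrow> real \<Rightarrow> real \<Rightarrow> real \<Rightarrow> real" where
  "quad_ratio_max a b c d e h =
     ((a*h + c*d - 2*b*e) + sqrt ((a*h + c*d - 2*b*e)\<^sup>2 - 4*(d*h - e\<^sup>2)*(a*c - b\<^sup>2))) / (2*(d*h - e\<^sup>2))"

definition quad_ratio_argmax :: "real \<Rightarrow> real \<Rightarrow> real \<Rightarrow> real \<Rightarrow> real \<Rightarrow> real \<Rightarrow> real" where
  "quad_ratio_argmax a b c d e h =
     (quad_ratio_max a b c d e h * e - b) / (c - quad_ratio_max a b c d e h * h)"

lemma quad_ratio_max_sub_square:
  fixes a b c d e h :: real
  defines "\<mu> \<equiv> quad_ratio_max a b c d e h" and "t \<equiv> quad_ratio_argmax a b c d e h"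
  assumes D_pos: "\<And>\<tau>. d + 2*e*\<tau> + h*\<tau>\<^sup>2 > 0" and "h > 0" and "c*e - b*h \<noteq> 0"
  shows "c - \<mu> * h < 0"
    and "(a + 2*b*\<tau> + c*\<tau>\<^sup>2) - \<mu> * (d + 2*e*\<tau> + h*\<tau>\<^sup>2) = (c - \<mu> * h) * (\<tau> - t)\<^sup>2"
proof -
  define K where "K = d*h - e\<^sup>2"
  define P where "P = a*h + c*d - 2*b*e"
  define R where "R = a*c - b\<^sup>2"
  define disc where "disc = P\<^sup>2 - 4*K*R"
  have \<mu>: "\<mu> = (P + sqrt disc) / (2*K)"
    unfolding \<mu>_def quad_ratio_max_def K_def P_def R_def disc_def ..
  have "d + 2*e*(-e/h) + h*(-e/h)\<^sup>2 > 0" by (rule D_pos)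
  then have K: "K > 0" using \<open>h > 0\<close> by (simp add: K_def power2_eq_square field_simps)
  have completed_square: "4*K*(K*y\<^sup>2 - P*y + R) = (2*K*y - P)\<^sup>2 - disc" for y
    by (simp add: disc_def power2_eq_square algebra_simps)
  text \<open>The characteristic polynomial is negative at \<open>c/h\<close>, so \<open>\<mu> > c/h\<close>.\<close>
  have "K*(c/h)\<^sup>2 - P*(c/h) + R = -(c*e - b*h)\<^sup>2/h\<^sup>2"
    using \<open>h > 0\<close> by (simp add: K_def P_def R_def field_simps power2_eq_square)
  then have "K*(c/h)\<^sup>2 - P*(c/h) + R < 0"
    using \<open>c*e - b*h \<noteq> 0\<close> \<open>h > 0\<close> by simp
  then have "(2*K*(c/h) - P)\<^sup>2 < disc"
    using completed_square[of "c/h"] K by (smt (verit) mult_pos_neg)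
  moreover from this have "disc > 0" by (smt (verit) zero_le_power2)
  ultimately have "\<bar>2*K*(c/h) - P\<bar> < sqrt disc"
    by (metis real_sqrt_abs real_sqrt_less_mono)
  then have "c/h < \<mu>" using K by (simp add: \<mu> field_simps)
  then show neg: "c - \<mu> * h < 0" using \<open>h > 0\<close> by (simp add: field_simps)
  have "4*K*(K*\<mu>\<^sup>2 - P*\<mu> + R) = 0"
    unfolding completed_square using K \<open>disc > 0\<close> by (simp add: \<mu>)
  then have "K*\<mu>\<^sup>2 - P*\<mu> + R = 0" using K by simp
  then have square: "(b - \<mu>*e)\<^sup>2 = (a - \<mu>*d) * (c - \<mu>*h)"
    by (simp add: K_def P_def R_def power2_eq_square algebra_simps)
  have t: "\<tau> - t = \<tau> + (b - \<mu>*e) / (c - \<mu>*h)"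
    using neg by (simp add: t_def \<mu>_def quad_ratio_argmax_def field_simps)
  show "(a + 2*b*\<tau> + c*\<tau>\<^sup>2) - \<mu> * (d + 2*e*\<tau> + h*\<tau>\<^sup>2) = (c - \<mu> * h) * (\<tau> - t)\<^sup>2"
    unfolding t using quadratic_eq_square[OF _ square, of \<tau>] neg by (simp add: algebra_simps)
qed

lemma quad_ratio_le_max:
  fixes a b c d e h :: real
  assumes D_pos: "\<And>\<tau>. d + 2*e*\<tau> + h*\<tau>\<^sup>2 > 0" and "h > 0" and "c*e - b*h \<noteq> 0"
  shows "(a + 2*b*\<tau> + c*\<tau>\<^sup>2) / (d + 2*e*\<tau> + h*\<tau>\<^sup>2) \<le> quad_ratio_max a b c d e h"
    and "(a + 2*b*\<tau> + c*\<tau>\<^sup>2) / (d + 2*e*\<tau> + h*\<tau>\<^sup>2) = quad_ratio_max a b c d e h \<longleftrightarrow>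
           \<tau> = quad_ratio_argmax a b c d e h"
proof -
  note square = quad_ratio_max_sub_square[where a = a, OF D_pos \<open>h > 0\<close> \<open>c*e - b*h \<noteq> 0\<close>]
  have "(a + 2*b*\<tau> + c*\<tau>\<^sup>2) - quad_ratio_max a b c d e h * (d + 2*e*\<tau> + h*\<tau>\<^sup>2) \<le> 0"
    unfolding square(2) using square(1) by (simp add: mult_nonpos_nonneg)
  then show "(a + 2*b*\<tau> + c*\<tau>\<^sup>2) / (d + 2*e*\<tau> + h*\<tau>\<^sup>2) \<le> quad_ratio_max a b c d e h"
    using D_pos[of \<tau>] by (simp add: divide_le_eq)
  have "(a + 2*b*\<tau> + c*\<tau>\<^sup>2) / (d + 2*e*\<tau> + h*\<tau>\<^sup>2) = quad_ratio_max a b c d e h \<longleftrightarrow>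
      (a + 2*b*\<tau> + c*\<tau>\<^sup>2) - quad_ratio_max a b c d e h * (d + 2*e*\<tau> + h*\<tau>\<^sup>2) = 0"
    using D_pos[of \<tau>] by (simp add: divide_eq_eq)
  also have "\<dots> \<longleftrightarrow> \<tau> = quad_ratio_argmax a b c d e h"
    unfolding square(2) using square(1) by simp
  finally show "(a + 2*b*\<tau> + c*\<tau>\<^sup>2) / (d + 2*e*\<tau> + h*\<tau>\<^sup>2) = quad_ratio_max a b c d e h \<longleftrightarrow>
      \<tau> = quad_ratio_argmax a b c d e h" .
qed

definition line_argmax :: "real^'n^'m \<Rightarrow> real^'n^'l \<Rightarrow> real^'n \<Rightarrow> real^'n \<Rightarrow> real" where
  "line_argmax A B v x =
     quad_ratio_argmax ((norm (A *v v))\<^sup>2) (inner (A *v v) (A *v x)) ((norm (A *v x))\<^sup>2)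
       ((norm (B *v v))\<^sup>2) (inner (B *v v) (B *v x)) ((norm (B *v x))\<^sup>2)"

lemma is_line_max_iff_line_argmax:
  fixes A :: "real^'n^'m" and B :: "real^'n^'l"
  assumes kerB: "\<forall>u. B *v u = 0 \<longrightarrow> u = 0" and slope: "rayq_slope A B x v \<noteq> 0"
  shows "is_line_max A B v x t \<longleftrightarrow> t = line_argmax A B v x"
proof -
  define a b c where "a = (norm (A *v v))\<^sup>2" and "b = inner (A *v v) (A *v x)"
    and "c = (norm (A *v x))\<^sup>2"
  define d e h where "d = (norm (B *v v))\<^sup>2" and "e = inner (B *v v) (B *v x)"
    and "h = (norm (B *v x))\<^sup>2"
  have rayq_line: "rayq A B (v + \<tau> *\<^sub>R x) = (a + 2*b*\<tau> + c*\<tau>\<^sup>2) / (d + 2*e*\<tau> + h*\<tau>\<^sup>2)" for \<tau>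
    by (simp add: rayq_def power2_norm_matrix_vector_line a_def b_def c_def d_def e_def h_def)
  have nz: "v + \<tau> *\<^sub>R x \<noteq> 0" for \<tau>
    using slope rayq_slope_line_through_0(2) by blast
  have D_pos: "d + 2*e*\<tau> + h*\<tau>\<^sup>2 > 0" for \<tau>
    using kerB nz[of \<tau>] by (auto simp: d_def e_def h_def power2_norm_matrix_vector_line[symmetric])
  have "x \<noteq> 0" using slope by (auto simp: rayq_slope_def)
  then have "h > 0" using kerB by (auto simp: h_def)
  have "c*e - b*h \<noteq> 0"
    using slope by (simp add: rayq_slope_def b_def c_def e_def h_def inner_commute)
  note max = quad_ratio_le_max[where a = a, OF D_pos \<open>h > 0\<close> this, folded rayq_line]
  have "is_line_max A B v x t \<longleftrightarrow> (\<forall>s. rayq A B (v + s *\<^sub>R x) \<le> rayq A B (v + t *\<^sub>R x))"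
    using nz by (simp add: is_line_max_def)
  also have "\<dots> \<longleftrightarrow> rayq A B (v + t *\<^sub>R x) = quad_ratio_max a b c d e h"
    using max(1) max(2)[of "quad_ratio_argmax a b c d e h"] by (metis order_antisym)
  also have "\<dots> \<longleftrightarrow> t = quad_ratio_argmax a b c d e h" by (rule max(2))
  also have "quad_ratio_argmax a b c d e h = line_argmax A B v x"
    by (simp add: line_argmax_def a_def b_def c_def d_def e_def h_def)
  finally show ?thesis .
qed

definition line_step :: "real^'n^'m \<Rightarrow> real^'n^'l \<Rightarrow> real^'n \<Rightarrow> real^'n \<Rightarrow> real^'n" where
  "line_step A B v x =
     (v + line_argmax A B v x *\<^sub>R x) /\<^sub>R norm (v + line_argmax A B v x *\<^sub>R x)"

lemma borel_measurable_line_step [measurable (raw)]: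
  fixes A :: "real^'n^'m" and B :: "real^'n^'l"
  assumes [measurable]: "f \<in> borel_measurable N" "g \<in> borel_measurable N"
  shows "(\<lambda>\<omega>. line_step A B (f \<omega>) (g \<omega>)) \<in> borel_measurable N"
  unfolding line_step_def line_argmax_def quad_ratio_argmax_def quad_ratio_max_def by measurable

section \<open>Sufficient increase\<close>

text \<open>The test step \<open>\<tau>\<close> is proportional to the slope \<open>\<alpha>\<close>; the factor \<open>1 / (2K\<^sup>2 + 1)\<close> keeps
  \<open>\<bar>\<tau>\<bar> \<le> 1\<close> and the second-order term below the first-order gain.\<close>
lemma quad_ratio_test_step:
  fixes a b c d e h K \<alpha> \<tau> :: real
  assumes \<alpha>: "\<alpha> = b*d - a*e" and \<tau>: "\<tau> = \<alpha> / (2*K\<^sup>2 + 1)"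
    and d: "0 < d" "d \<le> K"
    and bounds: "\<bar>a\<bar> \<le> K" "\<bar>b\<bar> \<le> K" "\<bar>c\<bar> \<le> K" "\<bar>e\<bar> \<le> K" "\<bar>h\<bar> \<le> K"
  shows "\<alpha>\<^sup>2 / (2*K\<^sup>2 + 1) \<le> (a + 2*b*\<tau> + c*\<tau>\<^sup>2) * d - a * (d + 2*e*\<tau> + h*\<tau>\<^sup>2)"
    and "d + 2*e*\<tau> + h*\<tau>\<^sup>2 \<le> 4*K"
proof -
  define \<eta> where "\<eta> = 1 / (2*K\<^sup>2 + 1)"
  have "2*K\<^sup>2 + 1 > 0" using zero_le_power2[of K] by linarith
  then have \<eta>: "\<eta> > 0" "2*K\<^sup>2 * \<eta> < 1" by (simp_all add: \<eta>_def divide_less_eq)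
  have prod_le: "\<bar>p*q\<bar> \<le> K\<^sup>2" if "\<bar>p\<bar> \<le> K" "\<bar>q\<bar> \<le> K" for p q
    using that by (simp add: abs_mult power2_eq_square mult_mono')
  have "\<tau> = \<alpha> * \<eta>" by (simp add: \<tau> \<eta>_def)
  have "\<bar>\<alpha>\<bar> \<le> 2*K\<^sup>2"
    using prod_le[of b d] prod_le[of a e] d bounds unfolding \<alpha> by simp
  then have "\<bar>\<alpha>\<bar> * \<eta> \<le> 2*K\<^sup>2 * \<eta>" using \<eta> by (simp add: mult_right_mono)
  moreover have "\<bar>\<tau>\<bar> = \<bar>\<alpha>\<bar> * \<eta>" using \<eta> \<open>\<tau> = \<alpha> * \<eta>\<close> by (simp add: abs_mult)
  ultimately have "\<bar>\<tau>\<bar> \<le> 1" using \<eta> by linarith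
  have "(a + 2*b*\<tau> + c*\<tau>\<^sup>2) * d - a * (d + 2*e*\<tau> + h*\<tau>\<^sup>2) = 2*\<tau>*\<alpha> + \<tau>\<^sup>2*(c*d - a*h)"
    unfolding \<alpha> by (simp add: power2_eq_square algebra_simps)
  also have "\<dots> = \<alpha>\<^sup>2 * (2*\<eta> + (c*d - a*h)*\<eta>\<^sup>2)"
    unfolding \<open>\<tau> = \<alpha> * \<eta>\<close> by (simp add: power2_eq_square algebra_simps)
  also have "\<dots> \<ge> \<alpha>\<^sup>2 * \<eta>"
  proof -
    have "\<bar>c*d - a*h\<bar> \<le> 2*K\<^sup>2" using prod_le[of c d] prod_le[of a h] d bounds by simp
    then have "\<bar>(c*d - a*h)*\<eta>\<^sup>2\<bar> \<le> 2*K\<^sup>2 * \<eta> * \<eta>"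
      using \<eta> by (simp add: abs_mult power2_eq_square mult_right_mono)
    also have "\<dots> \<le> \<eta>" using \<eta> by (simp add: mult_le_cancel_right1)
    finally show ?thesis by (simp add: mult_left_mono)
  qed
  finally show "\<alpha>\<^sup>2 / (2*K\<^sup>2 + 1) \<le> (a + 2*b*\<tau> + c*\<tau>\<^sup>2) * d - a * (d + 2*e*\<tau> + h*\<tau>\<^sup>2)"
    by (simp add: \<eta>_def)
  have "\<tau>\<^sup>2 \<le> 1" using \<open>\<bar>\<tau>\<bar> \<le> 1\<close> by (simp add: abs_square_le_1)
  then have "h*\<tau>\<^sup>2 \<le> K*1" using bounds(5) by (intro mult_mono) auto
  moreover have "e*\<tau> \<le> \<bar>e\<bar>*\<bar>\<tau>\<bar>" by (simp add: abs_mult[symmetric])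
  moreover have "\<bar>e\<bar>*\<bar>\<tau>\<bar> \<le> K*1" using \<open>\<bar>\<tau>\<bar> \<le> 1\<close> bounds(4) by (intro mult_mono) auto
  ultimately show "d + 2*e*\<tau> + h*\<tau>\<^sup>2 \<le> 4*K" using d by linarith
qed

lemma quad_ratio_increase:
  fixes a b c d e h K \<alpha> \<tau> :: real
  assumes \<alpha>: "\<alpha> = b*d - a*e" and \<tau>: "\<tau> = \<alpha> / (2*K\<^sup>2 + 1)"
    and d: "0 < d" "d \<le> K"
    and bounds: "\<bar>a\<bar> \<le> K" "\<bar>b\<bar> \<le> K" "\<bar>c\<bar> \<le> K" "\<bar>e\<bar> \<le> K" "\<bar>h\<bar> \<le> K"
    and D_pos: "d + 2*e*\<tau> + h*\<tau>\<^sup>2 > 0"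
  shows "a/d + \<alpha>\<^sup>2 / (4*K\<^sup>2 * (2*K\<^sup>2 + 1)) \<le> (a + 2*b*\<tau> + c*\<tau>\<^sup>2) / (d + 2*e*\<tau> + h*\<tau>\<^sup>2)"
proof -
  define N D where "N = a + 2*b*\<tau> + c*\<tau>\<^sup>2" and "D = d + 2*e*\<tau> + h*\<tau>\<^sup>2"
  note step = quad_ratio_test_step[OF \<alpha> \<tau> d bounds, folded N_def D_def]
  have "D > 0" using D_pos by (simp add: D_def)
  have "2*K\<^sup>2 + 1 > 0" using zero_le_power2[of K] by linarith
  have "d * D \<le> K * (4*K)" using step(2) d \<open>D > 0\<close> by (intro mult_mono) auto
  have "a/d + \<alpha>\<^sup>2 / (4*K\<^sup>2 * (2*K\<^sup>2 + 1)) = a/d + (\<alpha>\<^sup>2 / (2*K\<^sup>2 + 1)) / (K * (4*K))"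
    by (simp add: power2_eq_square)
  also have "\<dots> \<le> a/d + (\<alpha>\<^sup>2 / (2*K\<^sup>2 + 1)) / (d * D)"
    using \<open>d * D \<le> K * (4*K)\<close> \<open>2*K\<^sup>2 + 1 > 0\<close> d \<open>D > 0\<close>
    by (intro add_left_mono divide_left_mono) auto
  also have "\<dots> \<le> a/d + (N*d - a*D) / (d * D)"
    using step(1) d \<open>D > 0\<close> by (intro add_left_mono divide_right_mono) auto
  also have "\<dots> = N / D"
    using d \<open>D > 0\<close> by (simp add: field_simps)
  finally show ?thesis unfolding N_def D_def .
qed

lemma abs_inner_matrix_vector_le:
  fixes A :: "real^'n^'m"
  assumes "norm y = 1" and "norm z = 1"
  shows "\<bar>inner (A *v y) (A *v z)\<bar> \<le> (onorm ((*v) A))\<^sup>2"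
proof -
  have "\<bar>inner (A *v y) (A *v z)\<bar> \<le> norm (A *v y) * norm (A *v z)"
    by (rule Cauchy_Schwarz_ineq2)
  also have "\<dots> \<le> onorm ((*v) A) * onorm ((*v) A)"
  proof (rule mult_mono)
    show "norm (A *v y) \<le> onorm ((*v) A)" "norm (A *v z) \<le> onorm ((*v) A)"
      using onorm[OF matrix_vector_mul_bounded_linear, of A] assms by (metis mult.right_neutral)+
  qed (simp_all add: onorm_pos_le)
  finally show ?thesis by (simp add: power2_eq_square)
qed

lemma rayq_test_step_increase:
  fixes A :: "real^'n^'m" and B :: "real^'n^'l" and v x :: "real^'n" and K :: real
  defines "\<alpha> \<equiv> rayq_slope A B v x"
  defines "\<tau> \<equiv> \<alpha> / (2*K\<^sup>2 + 1)"
  assumes kerB: "\<forall>u. B *v u = 0 \<longrightarrow> u = 0" and unit: "norm v = 1" "norm x = 1"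
    and K: "(onorm ((*v) A))\<^sup>2 \<le> K" "(onorm ((*v) B))\<^sup>2 \<le> K"
  shows "v + \<tau> *\<^sub>R x \<noteq> 0"
    and "rayq A B v + \<alpha>\<^sup>2 / (4*K\<^sup>2 * (2*K\<^sup>2 + 1)) \<le> rayq A B (v + \<tau> *\<^sub>R x)"
proof -
  have bound_A: "\<bar>inner (A *v y) (A *v z)\<bar> \<le> K" and bound_B: "\<bar>inner (B *v y) (B *v z)\<bar> \<le> K"
    if "y \<in> {v, x}" "z \<in> {v, x}" for y z
    using abs_inner_matrix_vector_le[of y z A] abs_inner_matrix_vector_le[of y z B] that unit K
    by (auto intro: order_trans)
  show "v + \<tau> *\<^sub>R x \<noteq> 0"
  proof (cases "\<alpha> = 0")
    case True
    then show ?thesis using unit by (auto simp: \<tau>_def)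
  next
    case False
    then show ?thesis using rayq_slope_line_through_0(1) by (metis \<alpha>_def)
  qed
  then have "0 < (norm (B *v (v + \<tau> *\<^sub>R x)))\<^sup>2"
    using kerB by auto
  then show "rayq A B v + \<alpha>\<^sup>2 / (4*K\<^sup>2 * (2*K\<^sup>2 + 1)) \<le> rayq A B (v + \<tau> *\<^sub>R x)"
    unfolding rayq_def power2_norm_matrix_vector_line
  proof (intro quad_ratio_increase)
    show "\<alpha> = inner (A *v v) (A *v x) * (norm (B *v v))\<^sup>2 - (norm (A *v v))\<^sup>2 * inner (B *v v) (B *v x)"
      by (simp add: \<alpha>_def rayq_slope_def)
    show "\<tau> = \<alpha> / (2*K\<^sup>2 + 1)" by (simp add: \<tau>_def)
    show "0 < (norm (B *v v))\<^sup>2" using kerB unit by auto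
    show "(norm (B *v v))\<^sup>2 \<le> K" using bound_B[of v v] by (simp add: power2_norm_eq_inner)
    show "\<bar>(norm (A *v v))\<^sup>2\<bar> \<le> K" "\<bar>(norm (A *v x))\<^sup>2\<bar> \<le> K" "\<bar>(norm (B *v x))\<^sup>2\<bar> \<le> K"
      using bound_A[of v v] bound_A[of x x] bound_B[of x x] by (simp_all add: power2_norm_eq_inner)
    show "\<bar>inner (A *v v) (A *v x)\<bar> \<le> K" "\<bar>inner (B *v v) (B *v x)\<bar> \<le> K"
      using bound_A[of v x] bound_B[of v x] by simp_all
  qed
qed

lemma rayq_line_max_increase:
  fixes A :: "real^'n^'m" and B :: "real^'n^'l"
  assumes kerB: "\<forall>u. B *v u = 0 \<longrightarrow> u = 0"
  obtains C where "C > 0"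
    and "\<And>v x t. norm v = 1 \<Longrightarrow> norm x = 1 \<Longrightarrow> is_line_max A B v x t \<Longrightarrow>
           rayq A B v + C * (rayq_slope A B v x)\<^sup>2 \<le> rayq A B (v + t *\<^sub>R x)"
proof
  define K where "K = (onorm ((*v) A))\<^sup>2 + (onorm ((*v) B))\<^sup>2 + 1"
  have "K \<ge> 1" by (simp add: K_def)
  then show "1 / (4*K\<^sup>2 * (2*K\<^sup>2 + 1)) > 0" by (simp add: add_pos_nonneg)
  fix v x t
  assume unit: "norm v = 1" "norm x = 1" and max: "is_line_max A B v x t"
  have "(onorm ((*v) A))\<^sup>2 \<le> K" "(onorm ((*v) B))\<^sup>2 \<le> K"
    by (simp_all add: K_def)
  note test = rayq_test_step_increase[OF kerB unit this]
  have "rayq A B (v + (rayq_slope A B v x / (2*K\<^sup>2 + 1)) *\<^sub>R x) \<le> rayq A B (v + t *\<^sub>R x)"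
    using test(1) max by (auto simp: is_line_max_def)
  with test(2) show "rayq A B v + 1 / (4*K\<^sup>2 * (2*K\<^sup>2 + 1)) * (rayq_slope A B v x)\<^sup>2
      \<le> rayq A B (v + t *\<^sub>R x)"
    by simp
qed

lemma rayq_scaleR: "c \<noteq> 0 \<Longrightarrow> rayq A B (c *\<^sub>R u) = rayq A B u"
  by (simp add: rayq_def matrix_vector_mult_scaleR power_mult_distrib)

lemma rayq_bounded:
  fixes A :: "real^'n^'m" and B :: "real^'n^'l"
  assumes kerB: "\<forall>u. B *v u = 0 \<longrightarrow> u = 0"
  obtains F where "\<And>u. rayq A B u \<le> F"
proof -
  have "inj ((*v) B)"
    using kerB by (simp add: linear_injective_0[OF matrix_vector_mul_linear])
  then obtain c where "c > 0" and c: "\<And>u. c * norm u \<le> norm (B *v u)"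
    using linear_inj_bounded_below_pos[OF matrix_vector_mul_linear] by blast
  have "rayq A B u \<le> (onorm ((*v) A) / c)\<^sup>2" for u
  proof (cases "u = 0")
    case False
    then have "norm (B *v u) > 0" using kerB by auto
    have "norm (A *v u) \<le> onorm ((*v) A) * norm u"
      using onorm[OF matrix_vector_mul_bounded_linear] .
    also have "\<dots> \<le> onorm ((*v) A) * (norm (B *v u) / c)"
      using c[of u] \<open>c > 0\<close> by (intro mult_left_mono onorm_pos_le) (simp_all add: field_simps)
    finally have "norm (A *v u) / norm (B *v u) \<le> onorm ((*v) A) / c"
      using \<open>norm (B *v u) > 0\<close> by (simp add: divide_le_eq field_simps)
    then show ?thesis
      by (simp add: rayq_def power_divide[symmetric] power_mono)
  qed (simp add: rayq_def)
  then show thesis using that by blast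
qed

lemma rayq_slope_tendsto_0:
  fixes A :: "real^'n^'m" and B :: "real^'n^'l"
  assumes kerB: "\<forall>u. B *v u = 0 \<longrightarrow> u = 0"
    and unit: "\<And>k. norm (v k) = 1" "\<And>k. norm (x k) = 1"
    and max: "\<And>k. is_line_max A B (v k) (x k) (t k)"
    and step: "\<And>k. v (Suc k) = (v k + t k *\<^sub>R x k) /\<^sub>R norm (v k + t k *\<^sub>R x k)"
  shows "(\<lambda>k. rayq_slope A B (v k) (x k)) \<longlonglongrightarrow> 0"
proof -
  obtain C where "C > 0" and increase: "\<And>v x t. norm v = 1 \<Longrightarrow> norm x = 1 \<Longrightarrow>
      is_line_max A B v x t \<Longrightarrow> rayq A B v + C * (rayq_slope A B v x)\<^sup>2 \<le> rayq A B (v + t *\<^sub>R x)"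
    using rayq_line_max_increase[OF kerB] by blast
  obtain F where F: "\<And>u. rayq A B u \<le> F" using rayq_bounded[OF kerB] by blast
  have gain: "C * (rayq_slope A B (v k) (x k))\<^sup>2 \<le> rayq A B (v (Suc k)) - rayq A B (v k)" for k
  proof -
    have "v k + t k *\<^sub>R x k \<noteq> 0" using max[of k] by (simp add: is_line_max_def)
    then have "rayq A B (v (Suc k)) = rayq A B (v k + t k *\<^sub>R x k)"
      by (simp add: step rayq_scaleR)
    then show ?thesis using increase[OF unit max, of k] by simp
  qed
  have "summable (\<lambda>k. C * (rayq_slope A B (v k) (x k))\<^sup>2)"
  proof (rule summableI_nonneg_bounded)
    fix n
    have "(\<Sum>k<n. C * (rayq_slope A B (v k) (x k))\<^sup>2) \<le> (\<Sum>k<n. rayq A B (v (Suc k)) - rayq A B (v k))"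
      by (rule sum_mono) (rule gain)
    also have "\<dots> \<le> F - rayq A B (v 0)"
      using F[of "v n"] sum_lessThan_telescope[of "\<lambda>k. rayq A B (v k)"] by simp
    finally show "(\<Sum>k<n. C * (rayq_slope A B (v k) (x k))\<^sup>2) \<le> F - rayq A B (v 0)" .
  qed (use \<open>C > 0\<close> in simp)
  then have "(\<lambda>k. C * (rayq_slope A B (v k) (x k))\<^sup>2) \<longlonglongrightarrow> 0"
    by (rule summable_LIMSEQ_zero)
  then have "(\<lambda>k. (rayq_slope A B (v k) (x k))\<^sup>2) \<longlonglongrightarrow> 0"
    using \<open>C > 0\<close> by (simp add: tendsto_mult_left_iff)
  then have "(\<lambda>k. sqrt ((rayq_slope A B (v k) (x k))\<^sup>2)) \<longlonglongrightarrow> 0"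
    using tendsto_real_sqrt by fastforce
  then show ?thesis by (simp add: tendsto_rabs_zero_iff)
qed

section \<open>Null sets\<close>

lemma emeasure_lborel_translate:
  fixes S :: "'a::euclidean_space set"
  assumes "S \<in> sets borel"
  shows "emeasure lborel ((+) c -` S) = emeasure lborel S"
proof -
  have "emeasure lborel S = emeasure (distr lborel borel ((+) c)) S" by (simp add: lborel_distr_plus)
  also have "\<dots> = emeasure lborel ((+) c -` S)"
    using assms by (subst emeasure_distr) auto
  finally show ?thesis ..
qed

lemma ennreal_eq_0_if_multiples_le:
  fixes a b :: ennreal
  assumes "b < \<top>" and multiples: "\<And>N. N > 0 \<Longrightarrow> of_nat N * a \<le> b"
  shows "a = 0"
proof -
  obtain \<beta> where b: "b = ennreal \<beta>" "0 \<le> \<beta>" using \<open>b < \<top>\<close> by (cases b) auto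
  have "a \<le> b" using multiples[of 1] by simp
  then obtain \<alpha> where a: "a = ennreal \<alpha>" "0 \<le> \<alpha>" using \<open>b < \<top>\<close> by (cases a) auto
  have bound: "real N * \<alpha> \<le> \<beta>" if "N > 0" for N
    using multiples[OF that] a b by (simp add: ennreal_of_nat_eq_real_of_nat ennreal_mult'[symmetric])
  obtain N :: nat where N: "real N > \<beta> / \<alpha>" if "\<alpha> > 0"
    using reals_Archimedean2 by blast
  have "\<not> \<alpha> > 0"
  proof
    assume "\<alpha> > 0"
    then have "N > 0" using N b(2) by (metis divide_nonneg_pos gr0I less_le_not_le of_nat_0)
    then show False using bound[of N] N \<open>\<alpha> > 0\<close> by (simp add: divide_less_eq)
  qed
  then show ?thesis using a by simp
qed

lemma emeasure_lborel_eq_0_if_finite_on_lines: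
  fixes S :: "'a::euclidean_space set"
  assumes S: "S \<in> sets borel" and "bounded S"
    and lines: "\<And>y. finite {t. y + t *\<^sub>R z \<in> S} \<and> card {t. y + t *\<^sub>R z \<in> S} \<le> m"
  shows "emeasure lborel S = 0"
proof -
  obtain r where r: "\<And>y. y \<in> S \<Longrightarrow> norm y \<le> r"
    using \<open>bounded S\<close> by (auto simp: bounded_pos)
  define R where "R = cball (0::'a) (r + norm z)"
  text \<open>The translates of \<open>S\<close> by \<open>(j / N) z\<close>, \<open>j < N\<close>, lie in \<open>R\<close> and cover each point at
    most \<open>m\<close> times.\<close>
  have "of_nat N * emeasure lborel S \<le> of_nat m * emeasure lborel R" if "N > 0" for N
  proof -
    define T where "T j = (+) ((real j / real N) *\<^sub>R z) -` S" for j
    have "(\<Sum>j<N. indicator (T j) y) \<le> (of_nat m * indicator R y :: ennreal)" for y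
    proof -
      let ?J = "{j. j < N \<and> y \<in> T j}"
      have "card ?J = card ((\<lambda>j. real j / real N) ` ?J)"
        using \<open>N > 0\<close> by (intro card_image[symmetric]) (auto simp: inj_on_def)
      also have "\<dots> \<le> card {t. y + t *\<^sub>R z \<in> S}"
        using lines[of y] by (intro card_mono) (auto simp: T_def add.commute)
      finally have "card ?J \<le> m" using lines[of y] by linarith
      moreover have "y \<in> R" if "j < N" "y \<in> T j" for j
      proof -
        define c where "c = (real j / real N) *\<^sub>R z"
        have "real j / real N \<le> 1" using that by simp
        then have "norm c \<le> norm z"
          using mult_left_le_one_le[of "norm z" "real j / real N"] by (simp add: c_def)
        moreover have "norm (c + y) \<le> r" using that r by (simp add: T_def c_def)
        moreover have "norm y \<le> norm (c + y) + norm c" using norm_triangle_ineq4[of "c + y" c] by simp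
        ultimately show ?thesis by (simp add: R_def)
      qed
      moreover have "(\<Sum>j<N. indicator (T j) y) = (of_nat (card ?J) :: ennreal)"
        by (simp add: indicator_def sum.If_cases Int_def)
      ultimately show ?thesis by (auto simp: indicator_def)
    qed
    then have "(\<integral>\<^sup>+ y. (\<Sum>j<N. indicator (T j) y) \<partial>lborel) \<le> (\<integral>\<^sup>+ y. of_nat m * indicator R y \<partial>lborel)"
      by (intro nn_integral_mono)
    moreover have "(+) c -` S \<in> sets borel" for c :: 'a
      using measurable_sets[OF _ S, of "(+) c" borel]
      by (auto intro: borel_measurable_continuous_onI continuous_intros)
    then have "(\<integral>\<^sup>+ y. (\<Sum>j<N. indicator (T j) y) \<partial>lborel) = of_nat N * emeasure lborel S"
      by (simp add: T_def nn_integral_sum emeasure_lborel_translate[OF S])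
    ultimately show ?thesis by (simp add: R_def nn_integral_cmult_indicator)
  qed
  moreover have "of_nat m * emeasure lborel R < \<top>"
    using emeasure_lborel_cball_finite[of "0::'a" "r + norm z"]
    by (simp add: R_def ennreal_mult_less_top of_nat_less_top)
  ultimately show ?thesis by (intro ennreal_eq_0_if_multiples_le) auto
qed

lemma rayq_slope_line_poly:
  fixes A :: "real^'n^'m" and B :: "real^'n^'l"
  assumes "rayq_slope A B z w \<noteq> 0"
  obtains p where "p \<noteq> 0" "degree p \<le> 3" "\<And>t. poly p t = rayq_slope A B (y + t *\<^sub>R z) w"
proof
  define a0 a1 a2 where "a0 = (norm (A *v y))\<^sup>2" and "a1 = 2 * inner (A *v y) (A *v z)"
    and "a2 = (norm (A *v z))\<^sup>2"
  define b0 b1 where "b0 = inner (B *v y) (B *v w)" and "b1 = inner (B *v z) (B *v w)"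
  define c0 c1 where "c0 = inner (A *v y) (A *v w)" and "c1 = inner (A *v z) (A *v w)"
  define d0 d1 d2 where "d0 = (norm (B *v y))\<^sup>2" and "d1 = 2 * inner (B *v y) (B *v z)"
    and "d2 = (norm (B *v z))\<^sup>2"
  define p where "p = [:c0*d0 - a0*b0, c0*d1 + c1*d0 - a0*b1 - a1*b0,
                        c0*d2 + c1*d1 - a1*b1 - a2*b0, c1*d2 - a2*b1:]"
  have "coeff p 3 = rayq_slope A B z w"
    by (simp add: p_def numeral_3_eq_3 rayq_slope_def a2_def b1_def c1_def d2_def)
  then show "p \<noteq> 0" using assms by auto
  show "degree p \<le> 3" by (simp add: p_def)
  fix t
  have "inner (A *v (y + t *\<^sub>R z)) (A *v w) = c0 + c1 * t"
    and "inner (B *v (y + t *\<^sub>R z)) (B *v w) = b0 + b1 * t"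
    by (simp_all add: b0_def b1_def c0_def c1_def matrix_vector_right_distrib
        matrix_vector_mult_scaleR inner_add_left)
  then have "rayq_slope A B (y + t *\<^sub>R z) w =
      (c0 + c1 * t) * (d0 + d1 * t + d2 * t\<^sup>2) - (a0 + a1 * t + a2 * t\<^sup>2) * (b0 + b1 * t)"
    unfolding rayq_slope_def power2_norm_matrix_vector_line a0_def a1_def a2_def d0_def d1_def d2_def
    by simp
  then show "poly p t = rayq_slope A B (y + t *\<^sub>R z) w"
    by (simp add: p_def power2_eq_square algebra_simps)
qed

lemma emeasure_lborel_rayq_slope_zero_set:
  fixes A :: "real^'n^'m" and B :: "real^'n^'l"
  assumes "rayq_slope A B z w \<noteq> 0"
  shows "emeasure lborel ({y. rayq_slope A B y w = 0} \<inter> ball 0 1) = 0"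
proof (rule emeasure_lborel_eq_0_if_finite_on_lines[where z = z and m = 3])
  show "{y. rayq_slope A B y w = 0} \<inter> ball 0 1 \<in> sets borel" by measurable
  show "bounded ({y. rayq_slope A B y w = 0} \<inter> ball 0 1)" by (simp add: bounded_Int)
  fix y
  obtain p where p: "p \<noteq> 0" "degree p \<le> 3" "\<And>t. poly p t = rayq_slope A B (y + t *\<^sub>R z) w"
    using rayq_slope_line_poly[OF assms] by metis
  have "{t. y + t *\<^sub>R z \<in> {y. rayq_slope A B y w = 0} \<inter> ball 0 1} \<subseteq> {t. poly p t = 0}"
    using p(3) by auto
  moreover have "finite {t. poly p t = 0}" and "card {t. poly p t = 0} \<le> 3"
    using poly_roots_finite[OF p(1)] card_poly_roots_bound[OF p(1)] p(2) by auto
  ultimately show "finite {t. y + t *\<^sub>R z \<in> {y. rayq_slope A B y w = 0} \<inter> ball 0 1} \<and>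
      card {t. y + t *\<^sub>R z \<in> {y. rayq_slope A B y w = 0} \<inter> ball 0 1} \<le> 3"
    by (meson card_mono finite_subset le_trans)
qed

lemma emeasure_unif_sphere_cone_eq_0:
  fixes Z :: "(real^'n) set"
  assumes Z: "Z \<in> sets borel" and cone: "\<And>c y. 0 < c \<Longrightarrow> y \<in> Z \<Longrightarrow> c *\<^sub>R y \<in> Z"
    and null: "emeasure lborel (Z \<inter> ball 0 1) = 0"
  shows "emeasure unif_sphere Z = 0"
proof -
  define U where "U = ball (0::real^'n) 1 - {0}"
  have [measurable]: "U \<in> sets borel" by (simp add: U_def)
  have "(\<lambda>x::real^'n. x /\<^sub>R norm x) \<in> borel_measurable borel" by measurable
  then have preimage: "(\<lambda>x::real^'n. x /\<^sub>R norm x) -` Z \<in> sets borel"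
    using measurable_sets_borel[OF _ Z] by fastforce
  have "emeasure unif_sphere Z = emeasure (uniform_measure lborel U) ((\<lambda>x. x /\<^sub>R norm x) -` Z)"
    unfolding unif_sphere_def U_def[symmetric] using Z by (subst emeasure_distr) auto
  also have "\<dots> = emeasure lborel ((\<lambda>x. x /\<^sub>R norm x) -` Z \<inter> U) / emeasure lborel U"
    using preimage by (simp add: Int_commute)
  also have "emeasure lborel ((\<lambda>x. x /\<^sub>R norm x) -` Z \<inter> U) = 0"
  proof (rule emeasure_eq_0[OF _ null])
    show "Z \<inter> ball 0 1 \<in> sets lborel" using Z by simp
    show "(\<lambda>x. x /\<^sub>R norm x) -` Z \<inter> U \<subseteq> Z \<inter> ball 0 1"
      using cone[of "norm y" "y /\<^sub>R norm y" for y] by (auto simp: U_def)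
  qed
  finally show ?thesis by simp
qed

lemma emeasure_unif_sphere_rayq_slope_zero_set:
  fixes A :: "real^'n^'m" and B :: "real^'n^'l"
  assumes kerB: "\<forall>u. B *v u = 0 \<longrightarrow> u = 0"
    and nonscalar: "gen_eigenspace A B (lambda_max A B) \<noteq> UNIV" and "w \<noteq> 0"
  shows "emeasure unif_sphere {y. rayq_slope A B y w = 0} = 0"
proof (rule emeasure_unif_sphere_cone_eq_0)
  show "{y. rayq_slope A B y w = 0} \<in> sets borel" by measurable
  show "c *\<^sub>R y \<in> {y. rayq_slope A B y w = 0}" if "0 < c" "y \<in> {y. rayq_slope A B y w = 0}" for c y
    using that by (simp add: rayq_slope_scaleR_left)
  obtain z where "rayq_slope A B z w \<noteq> 0"
    using exists_rayq_slope_ne_0[OF kerB nonscalar \<open>w \<noteq> 0\<close>] by blast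
  then show "emeasure lborel ({y. rayq_slope A B y w = 0} \<inter> ball 0 1) = 0"
    by (rule emeasure_lborel_rayq_slope_zero_set)
qed

lemma AE_unif_sphere_norm_eq_1: "AE y in unif_sphere. norm (y :: real^'n) = 1"
  unfolding unif_sphere_def by (subst AE_distr_iff) (auto intro!: AE_uniform_measureI)

lemma AE_ne_0_if_distributed:
  fixes g :: "'w \<Rightarrow> 'a::euclidean_space"
  assumes g: "distributed M lborel g f"
  shows "AE \<omega> in M. g \<omega> \<noteq> 0"
proof -
  have "AE x in density lborel f. x \<noteq> 0"
    using AE_lborel_singleton[of 0] distributed_borel_measurable[OF g]
    by (subst AE_density) (auto elim: eventually_mono)
  then have "AE x in distr M lborel g. x \<noteq> 0" unfolding distributed_distr_eq_density[OF g] .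
  then show ?thesis using distributed_measurable[OF g] by (subst (asm) AE_distr_iff) auto
qed

lemma (in prob_space) AE_indep_var_sections_null:
  assumes indep: "indep_var S W N Y" and Bad: "Bad \<in> sets (S \<Otimes>\<^sub>M N)"
    and sections: "\<And>w. w \<in> space S \<Longrightarrow> emeasure (distr M N Y) (Pair w -` Bad) = 0"
  shows "AE \<omega> in M. (W \<omega>, Y \<omega>) \<notin> Bad"
proof -
  have W: "random_variable S W" and Y: "random_variable N Y"
    and joint: "distr M S W \<Otimes>\<^sub>M distr M N Y = distr M (S \<Otimes>\<^sub>M N) (\<lambda>\<omega>. (W \<omega>, Y \<omega>))"
    using indep unfolding indep_var_distribution_eq by auto
  interpret Y: prob_space "distr M N Y" using Y by (rule prob_space_distr)
  have "emeasure (distr M (S \<Otimes>\<^sub>M N) (\<lambda>\<omega>. (W \<omega>, Y \<omega>))) Bad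
      = (\<integral>\<^sup>+w. emeasure (distr M N Y) (Pair w -` Bad) \<partial>distr M S W)"
    unfolding joint[symmetric] using Bad by (subst Y.emeasure_pair_measure_alt) auto
  also have "\<dots> = (\<integral>\<^sup>+w. 0 \<partial>distr M S W)" using sections by (intro nn_integral_cong) simp
  also have "\<dots> = 0" by simp
  finally have "Bad \<in> null_sets (distr M (S \<Otimes>\<^sub>M N) (\<lambda>\<omega>. (W \<omega>, Y \<omega>)))"
    using Bad by auto
  then have "AE z in distr M (S \<Otimes>\<^sub>M N) (\<lambda>\<omega>. (W \<omega>, Y \<omega>)). z \<notin> Bad" by (rule AE_not_in)
  then show ?thesis using W Y Bad by (subst (asm) AE_distr_iff) auto
qed

section \<open>The random process\<close>

definition history :: "nat \<Rightarrow> nat option set" where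
  "history k = insert None (Some ` {..<k})"

locale random_line_search = prob_space M
  for M :: "'w measure"
    and A :: "real^'n^'m" and B :: "real^'n^'l"
    and g :: "'w \<Rightarrow> real^'n" and x :: "nat \<Rightarrow> 'w \<Rightarrow> real^'n"
    and v :: "nat \<Rightarrow> 'w \<Rightarrow> real^'n" and tau :: "nat \<Rightarrow> 'w \<Rightarrow> real" +
  assumes ker_B: "\<forall>u. B *v u = 0 \<longrightarrow> u = 0"
    and eigenspace_ne_UNIV: "gen_eigenspace A B (lambda_max A B) \<noteq> UNIV"
    and g_ne_0: "AE \<omega> in M. g \<omega> \<noteq> 0"
    and x_measurable: "\<And>k. x k \<in> borel_measurable M"
    and x_unif: "\<And>k. distr M borel (x k) = unif_sphere"
    and indep: "indep_vars (\<lambda>_. borel) (\<lambda>i. case i of None \<Rightarrow> g | Some k \<Rightarrow> x k) UNIV"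
    and v_0: "AE \<omega> in M. v 0 \<omega> = g \<omega> /\<^sub>R norm (g \<omega>)"
    and tau_line_max: "AE \<omega> in M. \<forall>k. if \<exists>t. is_line_max A B (v k \<omega>) (x k \<omega>) t
                          then is_line_max A B (v k \<omega>) (x k \<omega>) (tau k \<omega>) else tau k \<omega> = 0"
    and v_Suc: "AE \<omega> in M. \<forall>k. v (Suc k) \<omega> =
                   (v k \<omega> + tau k \<omega> *\<^sub>R x k \<omega>) /\<^sub>R norm (v k \<omega> + tau k \<omega> *\<^sub>R x k \<omega>)"
begin

text \<open>Input \<open>None\<close> is the seed \<open>g\<close> and input \<open>Some j\<close> is the direction \<open>x j\<close>; \<open>past k \<omega>\<close>
  collects the inputs that determine \<open>v k \<omega>\<close>.\<close>
abbreviation past :: "nat \<Rightarrow> 'w \<Rightarrow> nat option \<Rightarrow> real^'n" where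
  "past k \<omega> \<equiv> restrict (\<lambda>i. (case i of None \<Rightarrow> g | Some j \<Rightarrow> x j) \<omega>) (history k)"

lemma AE_norm_x: "AE \<omega> in M. \<forall>k. norm (x k \<omega>) = 1"
proof (subst AE_all_countable, intro allI)
  fix k
  have "AE y in distr M borel (x k). norm y = 1"
    unfolding x_unif by (rule AE_unif_sphere_norm_eq_1)
  then show "AE \<omega> in M. norm (x k \<omega>) = 1"
    using x_measurable by (subst (asm) AE_distr_iff) auto
qed

lemma AE_norm_v: "AE \<omega> in M. \<forall>k. norm (v k \<omega>) = 1"
  using g_ne_0 v_0 tau_line_max v_Suc
proof eventually_elim
  case (elim \<omega>)
  show ?case
  proof
    fix k show "norm (v k \<omega>) = 1"
    proof (induction k)
      case (Suc k)
      have "v k \<omega> + tau k \<omega> *\<^sub>R x k \<omega> \<noteq> 0"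
      proof (cases "\<exists>t. is_line_max A B (v k \<omega>) (x k \<omega>) t")
        case True
        then show ?thesis using elim(3) by (metis is_line_max_def)
      next
        case False
        then show ?thesis using elim(3) Suc by (metis add_0_right norm_zero scale_zero_left zero_neq_one)
      qed
      then show ?case using elim(4) by simp
    qed (use elim in simp)
  qed
qed

lemma AE_v_Suc_eq_line_step:
  "AE \<omega> in M. \<forall>k. rayq_slope A B (x k \<omega>) (v k \<omega>) \<noteq> 0 \<longrightarrow>
     v (Suc k) \<omega> = line_step A B (v k \<omega>) (x k \<omega>)"
  using tau_line_max v_Suc
proof eventually_elim
  case (elim \<omega>)
  show ?case
  proof safe
    fix k assume slope: "rayq_slope A B (x k \<omega>) (v k \<omega>) \<noteq> 0"
    have "tau k \<omega> = line_argmax A B (v k \<omega>) (x k \<omega>)"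
      using elim(1) is_line_max_iff_line_argmax[OF ker_B slope] by (metis (full_types))
    then show "v (Suc k) \<omega> = line_step A B (v k \<omega>) (x k \<omega>)"
      using elim(2) by (simp add: line_step_def)
  qed
qed

lemma AE_rayq_slope_ne_0_if_past:
  assumes h: "h \<in> borel_measurable (PiM (history k) (\<lambda>_. borel))"
  shows "AE \<omega> in M. h (past k \<omega>) \<noteq> 0 \<longrightarrow> rayq_slope A B (x k \<omega>) (h (past k \<omega>)) \<noteq> 0"
proof -
  have "indep_var (PiM (history k) (\<lambda>_. borel)) (past k)
      (PiM {Some k} (\<lambda>_. borel)) (\<lambda>\<omega>. restrict (\<lambda>i. (case i of None \<Rightarrow> g | Some j \<Rightarrow> x j) \<omega>) {Some k})"
    by (rule indep_var_restrict[OF indep]) (auto simp: history_def)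
  from indep_var_compose[OF this h measurable_component_singleton[of "Some k" "{Some k}"]]
  have indep_h: "indep_var borel (\<lambda>\<omega>. h (past k \<omega>)) borel (x k)"
    by (simp add: comp_def)
  define bad where "bad = {(w, y). w \<noteq> 0 \<and> rayq_slope A B y w = 0}"
  have "bad = {p. fst p \<noteq> 0} \<inter> {p. rayq_slope A B (snd p) (fst p) = 0}"
    by (auto simp: bad_def)
  also have "\<dots> \<in> sets borel"
    by (intro sets.Int borel_open borel_closed open_Collect_neq closed_Collect_eq continuous_intros)
  finally have bad: "bad \<in> sets (borel \<Otimes>\<^sub>M borel)"
    unfolding borel_prod .
  have "emeasure (distr M borel (x k)) (Pair w -` bad) = 0" for w
    using emeasure_unif_sphere_rayq_slope_zero_set[OF ker_B eigenspace_ne_UNIV, of w]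
    by (cases "w = 0") (simp_all add: x_unif bad_def)
  then have "AE \<omega> in M. (h (past k \<omega>), x k \<omega>) \<notin> bad"
    using AE_indep_var_sections_null[OF indep_h bad] by blast
  then show ?thesis by (auto simp: bad_def elim: eventually_mono)
qed

text \<open>No measurability of \<open>v\<close> is assumed: it is the uniqueness of the line maximiser that makes
  \<open>v k\<close> almost surely a Borel function of the past, as independence requires.\<close>
lemma v_eq_function_of_past:
  "\<exists>h \<in> borel_measurable (PiM (history k) (\<lambda>_. borel)). AE \<omega> in M. v k \<omega> = h (past k \<omega>)"
proof (induction k)
  case 0
  have "None \<in> history 0" by (simp add: history_def)
  have "(\<lambda>y::real^'n. y /\<^sub>R norm y) \<in> borel_measurable borel" by measurable
  from measurable_compose[OF measurable_component_singleton[OF \<open>None \<in> history 0\<close>, of "\<lambda>_. borel"] this]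
  have "(\<lambda>f :: nat option \<Rightarrow> real^'n. f None /\<^sub>R norm (f None))
      \<in> borel_measurable (PiM (history 0) (\<lambda>_. borel))" .
  moreover have "AE \<omega> in M. v 0 \<omega> = past 0 \<omega> None /\<^sub>R norm (past 0 \<omega> None)"
    using v_0 by (simp add: history_def)
  ultimately show ?case by (intro bexI[where x = "\<lambda>f. f None /\<^sub>R norm (f None)"])
next
  case (Suc k)
  then obtain h where h: "h \<in> borel_measurable (PiM (history k) (\<lambda>_. borel))"
    and v_k: "AE \<omega> in M. v k \<omega> = h (past k \<omega>)" by blast
  define h' where "h' f = line_step A B (h (restrict f (history k))) (f (Some k))"
    for f :: "nat option \<Rightarrow> real^'n"
  have "history k \<subseteq> history (Suc k)" "Some k \<in> history (Suc k)"
    by (auto simp: history_def)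
  then have "h' \<in> borel_measurable (PiM (history (Suc k)) (\<lambda>_. borel))"
    unfolding h'_def
    by (intro borel_measurable_line_step measurable_compose[OF measurable_restrict_subset h]
        measurable_component_singleton)
  moreover have "AE \<omega> in M. v (Suc k) \<omega> = h' (past (Suc k) \<omega>)"
    using v_k AE_rayq_slope_ne_0_if_past[OF h] AE_norm_v AE_v_Suc_eq_line_step
  proof eventually_elim
    case (elim \<omega>)
    then have "rayq_slope A B (x k \<omega>) (v k \<omega>) \<noteq> 0"
      by (metis norm_zero zero_neq_one)
    moreover have "restrict (past (Suc k) \<omega>) (history k) = past k \<omega>"
      using \<open>history k \<subseteq> history (Suc k)\<close> by (intro ext) (auto simp: restrict_def)
    ultimately show ?case
      using elim \<open>Some k \<in> history (Suc k)\<close> by (simp add: h'_def)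
  qed
  ultimately show ?case by blast
qed

lemma AE_rayq_slope_ne_0: "AE \<omega> in M. \<forall>k. rayq_slope A B (x k \<omega>) (v k \<omega>) \<noteq> 0"
proof (subst AE_all_countable, intro allI)
  fix k
  obtain h where h: "h \<in> borel_measurable (PiM (history k) (\<lambda>_. borel))"
    and v_k: "AE \<omega> in M. v k \<omega> = h (past k \<omega>)"
    using v_eq_function_of_past by blast
  show "AE \<omega> in M. rayq_slope A B (x k \<omega>) (v k \<omega>) \<noteq> 0"
    using v_k AE_rayq_slope_ne_0_if_past[OF h] AE_norm_v
    by eventually_elim (metis norm_zero zero_neq_one)
qed

theorem AE_rayq_slope_tendsto_0: "AE \<omega> in M. (\<lambda>k. rayq_slope A B (v k \<omega>) (x k \<omega>)) \<longlonglongrightarrow> 0"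
  using AE_rayq_slope_ne_0 AE_norm_v AE_norm_x tau_line_max v_Suc
proof eventually_elim
  case (elim \<omega>)
  have "is_line_max A B (v k \<omega>) (x k \<omega>) (tau k \<omega>)" for k
    using elim(1,4) is_line_max_iff_line_argmax[OF ker_B] by metis
  then show ?case by (intro rayq_slope_tendsto_0[OF ker_B]) (use elim in auto)
qed

end

theorem mainTheorem2:
  fixes A :: "real^'n^'m" and B :: "real^'n^'l"
    and M :: "'w measure"
    and g :: "'w \<Rightarrow> real^'n"
    and x :: "nat \<Rightarrow> 'w \<Rightarrow> real^'n"
    and v :: "nat \<Rightarrow> 'w \<Rightarrow> real^'n"
    and tau :: "nat \<Rightarrow> 'w \<Rightarrow> real"
  assumes dim_ge: "CARD('n) \<ge> 2"
    and kerB: "\<forall>u. B *v u = 0 \<longrightarrow> u = 0"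
    and dimG: "dim (gen_eigenspace A B (lambda_max A B)) < CARD('n) - 1"
    and P: "prob_space M"
    and g_gauss: "distributed M lborel g
        (\<lambda>z. ennreal ((2 * pi) powr (- real CARD('n) / 2) * exp (- (norm z)\<^sup>2 / 2)))"
    and x_rv: "\<And>k. x k \<in> borel_measurable M"
    and x_unif: "\<And>k. distr M borel (x k) = unif_sphere"
    and indep: "prob_space.indep_vars M (\<lambda>_. borel)
        (\<lambda>i. case i of None \<Rightarrow> g | Some k \<Rightarrow> x k) (UNIV :: nat option set)"
    and tau_meas: "\<And>k. tau k \<in> borel_measurable M"
    and v0: "AE \<omega> in M. v 0 \<omega> = g \<omega> /\<^sub>R norm (g \<omega>)"
    and tau_def: "AE \<omega> in M. \<forall>k. if (\<exists>t. is_line_max A B (v k \<omega>) (x k \<omega>) t)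
                          then is_line_max A B (v k \<omega>) (x k \<omega>) (tau k \<omega>)
                          else tau k \<omega> = 0"
    and v_step: "AE \<omega> in M. \<forall>k. v (Suc k) \<omega> =
        (v k \<omega> + tau k \<omega> *\<^sub>R x k \<omega>) /\<^sub>R norm (v k \<omega> + tau k \<omega> *\<^sub>R x k \<omega>)"
  shows "AE \<omega> in M.
    (\<lambda>k. inner (A *v v k \<omega>) (A *v x k \<omega>) * (norm (B *v v k \<omega>))\<^sup>2
         - (norm (A *v v k \<omega>))\<^sup>2 * inner (B *v v k \<omega>) (B *v x k \<omega>)) \<longlonglongrightarrow> 0"
proof -
  have nonscalar: "gen_eigenspace A B (lambda_max A B) \<noteq> UNIV"
    using dimG by auto
  have g_ne_0: "AE \<omega> in M. g \<omega> \<noteq> 0"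
    using g_gauss by (rule AE_ne_0_if_distributed)
  interpret random_line_search M A B g x v tau
    by (rule random_line_search.intro[OF P random_line_search_axioms.intro])
      (fact kerB nonscalar g_ne_0 x_rv x_unif indep v0 tau_def v_step)+
  show ?thesis
    using AE_rayq_slope_tendsto_0 unfolding rayq_slope_def .
qed

end
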